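(* For every bipartite quantum channel $\mathcal{N}\in\mathrm{Ch}(A'B',AB)$, \[ S^{\downarrow}_{\infty}(R_AA|R_BB)_{\Phi^{\mathcal{N}}}-\log|A'|\ \le\ S_{\infty}[A|B]_{\mathcal{N}}\ \le\ S_{\infty}(R_AA|R_BB)_{\Phi^{\mathcal{N}}}-\log|A'|. \]
   Context: All systems are finite-dimensional; $|X|$ denotes dimension; $\log$ is base 2. $\mathrm{St}(X)$ is the set of density operators, $\mathrm{Ch}(X',X)$ the set of quantum channels. Maximally entangled state: $\Phi_{RX}:=\frac1d\sum_{i,j=0}^{d-1}|ii\rangle\langle jj|$ with $R\simeq X$, $d=|X|$. The Choi state of $\mathcal{N}\in\mathrm{Ch}(A'B',AB)$ is $\Phi^{\mathcal{N}}_{R_AAR_BB}:=(\mathrm{id}_{R_AR_B}\otimes\mathcal{N})(\Phi_{R_AA'}\otimes\Phi_{R_BB'})$, $R_A\simeq A'$, $R_B\simeq B'$. $\mathcal{R}^{\mathbb 1}_{A'\to A}(X):=\operatorname{tr}(X)\mathbb 1_A$. $D_\infty(\rho\|\sigma):=\log\inf\{\lambda\ge0:\rho\le\lambda\sigma\}$; for a channel $\mathcal{M}$ and CP map $\mathcal{M}'$ with the same input $X'$, $D_\infty[\mathcal{M}\|\mathcal{M}']:=\sup_{\rho\in\mathrm{St}(RX')}D_\infty((\mathrm{id}_R\otimes\mathcal{M})(\rho)\|(\mathrm{id}_R\otimes\mathcal{M}')(\rho))$. Conditional channel min-entropy: $S_\infty[A|B]_{\mathcal{N}}:=-\inf_{\mathcal{Q}\in\mathrm{Ch}(B',B)}D_\infty[\mathcal{N}\|\mathcal{R}^{\mathbb1}_{A'\to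 A}\otimes\mathcal{Q}_{B'\to B}]$. For a bipartite state $\rho_{XY}$: $S_\infty(X|Y)_\rho:=-\inf_{\sigma\in\mathrm{St}(Y)}D_\infty(\rho_{XY}\|\mathbb1_X\otimes\sigma_Y)$ and $S^\downarrow_\infty(X|Y)_\rho:=-D_\infty(\rho_{XY}\|\mathbb1_X\otimes\rho_Y)$. *)

theory Defs
  imports "HOL-Analysis.Analysis" "Jordan_Normal_Form.Matrix"
begin

text \<open>A system of dimension d is C^d; operators on it are complex d x d
 matrices (Jordan_Normal_Form type complex mat). For a composite system XY with
 dimensions dX, dY the basis index of |x>|y> is x * dY + y (first factor most significant).
 Logarithms are base 2. Values of divergences and entropies live in the extended reals,
 with the usual conventions log 0 = -infinity and inf of the empty set = +infinity.\<close>

definition mtrace :: "complex mat \<Rightarrow> complex" where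
  "mtrace A = (\<Sum>i<dim_row A. A $$ (i,i))"

definition psd :: "nat \<Rightarrow> complex mat \<Rightarrow> bool" where
  "psd d A \<longleftrightarrow> A \<in> carrier_mat d d \<and>
     (\<forall>v :: nat \<Rightarrow> complex. (\<Sum>i<d. \<Sum>j<d. cnj (v i) * A $$ (i,j) * v j) \<in> \<real> \<and>
         0 \<le> Re (\<Sum>i<d. \<Sum>j<d. cnj (v i) * A $$ (i,j) * v j))"

definition loewner_le :: "nat \<Rightarrow> complex mat \<Rightarrow> complex mat \<Rightarrow> bool" where
  "loewner_le d A B \<longleftrightarrow> A \<in> carrier_mat d d \<and> B \<in> carrier_mat d d \<and> psd d (B - A)"

definition density_ops :: "nat \<Rightarrow> complex mat set" where
  "density_ops d = {\<rho>. psd d \<rho> \<and> mtrace \<rho> = 1}"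

definition tensor_mat :: "complex mat \<Rightarrow> complex mat \<Rightarrow> complex mat" where
  "tensor_mat A B = mat (dim_row A * dim_row B) (dim_col A * dim_col B)
     (\<lambda>(r,c). A $$ (r div dim_row B, c div dim_col B) * B $$ (r mod dim_row B, c mod dim_col B))"

definition block_of :: "nat \<Rightarrow> complex mat \<Rightarrow> nat \<Rightarrow> nat \<Rightarrow> complex mat" where
  "block_of d X a b = mat d d (\<lambda>(i,j). X $$ (a * d + i, b * d + j))"

definition mat_unit :: "nat \<Rightarrow> nat \<Rightarrow> nat \<Rightarrow> complex mat" where
  "mat_unit d i j = mat d d (\<lambda>(r,c). if r = i \<and> c = j then 1 else 0)"

definition ptrace1 :: "nat \<Rightarrow> nat \<Rightarrow> complex mat \<Rightarrow> complex mat" where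
  "ptrace1 dX dY \<rho> = mat dY dY (\<lambda>(i,j). \<Sum>a<dX. \<rho> $$ (a * dY + i, a * dY + j))"

text \<open>Linear maps from operators on C^din to operators on C^dout are modelled as
 functions complex mat => complex mat, considered on carrier_mat din din.\<close>

definition id_tensor_map ::
  "nat \<Rightarrow> nat \<Rightarrow> nat \<Rightarrow> (complex mat \<Rightarrow> complex mat) \<Rightarrow> complex mat \<Rightarrow> complex mat" where
  "id_tensor_map k din dout M X = mat (k * dout) (k * dout)
     (\<lambda>(r,c). M (block_of din X (r div dout) (c div dout)) $$ (r mod dout, c mod dout))"

text \<open>Tensor product M1 \<otimes> M2 of linear maps (M1 : C^d1 -> C^e1, M2 : C^d2 -> C^e2),
 written entrywise,
 defined by linear extension of X1 \<otimes> X2 \<mapsto> M1 X1 \<otimes> M2 X2.\<close>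
definition tensor_map ::
  "nat \<Rightarrow> nat \<Rightarrow> nat \<Rightarrow> nat \<Rightarrow> (complex mat \<Rightarrow> complex mat) \<Rightarrow> (complex mat \<Rightarrow> complex mat)
     \<Rightarrow> complex mat \<Rightarrow> complex mat" where
  "tensor_map d1 d2 e1 e2 M1 M2 X = mat (e1 * e2) (e1 * e2) (\<lambda>(r,c).
     \<Sum>i<d1. \<Sum>j<d1. tensor_mat (M1 (mat_unit d1 i j)) (M2 (block_of d2 X i j)) $$ (r,c))"

definition linear_map_on :: "nat \<Rightarrow> nat \<Rightarrow> (complex mat \<Rightarrow> complex mat) \<Rightarrow> bool" where
  "linear_map_on din dout M \<longleftrightarrow>
     (\<forall>X \<in> carrier_mat din din. M X \<in> carrier_mat dout dout) \<and>
     (\<forall>X \<in> carrier_mat din din. \<forall>Y \<in> carrier_mat din din. M (X + Y) = M X + M Y) \<and>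
     (\<forall>c. \<forall>X \<in> carrier_mat din din. M (c \<cdot>\<^sub>m X) = c \<cdot>\<^sub>m M X)"

definition completely_positive :: "nat \<Rightarrow> nat \<Rightarrow> (complex mat \<Rightarrow> complex mat) \<Rightarrow> bool" where
  "completely_positive din dout M \<longleftrightarrow> linear_map_on din dout M \<and>
     (\<forall>k>0. \<forall>X. psd (k * din) X \<longrightarrow> psd (k * dout) (id_tensor_map k din dout M X))"

definition channels :: "nat \<Rightarrow> nat \<Rightarrow> (complex mat \<Rightarrow> complex mat) set" where
  "channels din dout = {M. completely_positive din dout M \<and>
     (\<forall>X \<in> carrier_mat din din. mtrace (M X) = mtrace X)}"

definition repl_id :: "nat \<Rightarrow> complex mat \<Rightarrow> complex mat" where
  "repl_id dA X = mtrace X \<cdot>\<^sub>m 1\<^sub>m dA"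

definition max_ent :: "nat \<Rightarrow> complex mat" where
  "max_ent d = mat (d * d) (d * d)
     (\<lambda>(r,c). if r div d = r mod d \<and> c div d = c mod d then 1 / of_nat d else 0)"

definition elog2 :: "real \<Rightarrow> ereal" where
  "elog2 x = (if x = 0 then -\<infinity> else ereal (log 2 x))"

definition Dmax :: "nat \<Rightarrow> complex mat \<Rightarrow> complex mat \<Rightarrow> ereal" where
  "Dmax d \<rho> \<sigma> =
     (let L = {t. 0 \<le> (t::real) \<and> loewner_le d \<rho> (complex_of_real t \<cdot>\<^sub>m \<sigma>)}
      in if L = {} then \<infinity> else elog2 (Inf L))"

text \<open>Channel divergence D_inf[M||M'] for maps from C^din to C^dout; the supremum ranges
 over all reference systems R (of any dimension k >= 1) and all states on R X'.\<close>
definition Dmax_ch ::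
  "nat \<Rightarrow> nat \<Rightarrow> (complex mat \<Rightarrow> complex mat) \<Rightarrow> (complex mat \<Rightarrow> complex mat) \<Rightarrow> ereal" where
  "Dmax_ch din dout M M' =
     (SUP p \<in> {(k, \<rho>). 0 < k \<and> \<rho> \<in> density_ops (k * din)}.
        Dmax (fst p * dout) (id_tensor_map (fst p) din dout M (snd p))
                            (id_tensor_map (fst p) din dout M' (snd p)))"

definition chan_cond_min_entropy ::
  "nat \<Rightarrow> nat \<Rightarrow> nat \<Rightarrow> nat \<Rightarrow> (complex mat \<Rightarrow> complex mat) \<Rightarrow> ereal" where
  "chan_cond_min_entropy dA' dB' dA dB N =
     - (INF Q \<in> channels dB' dB.
          Dmax_ch (dA' * dB') (dA * dB) N (tensor_map dA' dB' dA dB (repl_id dA) Q))"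

definition cond_min_entropy :: "nat \<Rightarrow> nat \<Rightarrow> complex mat \<Rightarrow> ereal" where
  "cond_min_entropy dX dY \<rho> =
     - (INF \<sigma> \<in> density_ops dY. Dmax (dX * dY) \<rho> (tensor_mat (1\<^sub>m dX) \<sigma>))"

definition cond_min_entropy_down :: "nat \<Rightarrow> nat \<Rightarrow> complex mat \<Rightarrow> ereal" where
  "cond_min_entropy_down dX dY \<rho> =
     - Dmax (dX * dY) \<rho> (tensor_mat (1\<^sub>m dX) (ptrace1 dX dY \<rho>))"

text \<open>Choi state of N in Ch(A'B',AB) on R_A A R_B B (|R_A| = |A'|, |R_B| = |B'|):
 (id_{R_A R_B} \<otimes> N)(Phi_{R_A A'} \<otimes> Phi_{R_B B'}). Up to the ordering of factors,
 Phi_{R_A A'} \<otimes> Phi_{R_B B'} is the maximally entangled state between R_A R_B and A'B';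
 we compute it on R_A R_B A B and then reorder the factors to R_A A R_B B.\<close>
definition choi_reindex :: "nat \<Rightarrow> nat \<Rightarrow> nat \<Rightarrow> nat \<Rightarrow> nat \<Rightarrow> nat" where
  "choi_reindex dA' dB' dA dB r =
     (let b = r mod dB; rb = (r div dB) mod dB'; a = (r div (dB * dB')) mod dA;
          ra = r div (dB * dB' * dA)
      in ((ra * dB' + rb) * dA + a) * dB + b)"

definition choi_state :: "nat \<Rightarrow> nat \<Rightarrow> nat \<Rightarrow> nat \<Rightarrow> (complex mat \<Rightarrow> complex mat) \<Rightarrow> complex mat" where
  "choi_state dA' dB' dA dB N =
     (let C = id_tensor_map (dA' * dB') (dA' * dB') (dA * dB) N (max_ent (dA' * dB'));
          D = dA' * dA * dB' * dB
      in mat D D (\<lambda>(r,c). C $$ (choi_reindex dA' dB' dA dB r, choi_reindex dA' dB' dA dB c)))"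

end

theory Submission
  imports Defs
begin

(* The channel max-divergence between two linear maps equals the max-divergence of their Choi
   matrices: the maximally entangled input attains it, and conversely t Phi^M - Phi^N >= 0 makes
   t M - N completely positive by Choi's theorem. The Choi matrix of R^1 (x) Q is
   |A'|^-1 1_{R_A A} (x) Phi^Q, hence
     S_inf[A|B]_N = - inf_Q D_inf(Phi^N || 1_{R_A A} (x) Phi^Q) - log |A'|,
   the infimum ranging over channels Q. Choi states of channels are states, which gives the upper
   bound. For the lower bound take Q with Phi^Q = Phi^N_{R_B B}; such a channel exists because N
   is trace preserving, so that the R_B-marginal of Phi^N is maximally mixed.
   Positivity is handled through Gram decompositions of positive semidefinite kernels. *)

section \<open>Finite sums and mixed-radix indices\<close>

lemma sum_lessThan_mult:
  fixes f :: "nat \<Rightarrow> 'a::comm_monoid_add"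
  shows "(\<Sum>r<k*d. f r) = (\<Sum>a<k. \<Sum>p<d. f (a*d+p))"
proof -
  have "(\<Sum>r<k*d. f r) = (\<Sum>a<k. sum f {a*d..<a*d+d})"
    by (rule sum.nat_group[symmetric])
  also have "\<dots> = (\<Sum>a<k. \<Sum>p<d. f (a*d+p))"
    by (simp add: sum.atLeastLessThan_shift_0[of f] atLeast0LessThan comp_def)
  finally show ?thesis .
qed

lemma sum_rotate3:
  "(\<Sum>x\<in>A. \<Sum>y\<in>B. \<Sum>k\<in>C. F x y k) = (\<Sum>k\<in>C. \<Sum>x\<in>A. \<Sum>y\<in>B. F x y k)"
  by (subst sum.swap) (simp add: sum.swap[of _ B])

lemma sum_sum_delta:
  fixes f :: "nat \<Rightarrow> nat \<Rightarrow> 'a::comm_monoid_add"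
  assumes "a < m" "b < n"
  shows "(\<Sum>i<m. \<Sum>j<n. if i = a \<and> j = b then f i j else 0) = f a b"
proof -
  have "(\<Sum>j<n. if i = a \<and> j = b then f i j else 0) = (if i = a then f i b else 0)" for i
    using assms(2) by (cases "i = a") (simp_all add: sum.delta)
  then show ?thesis using assms(1) by (simp add: sum.delta)
qed

lemma if_zero_distrib:
  "(if P then (x::complex) else 0) * y = (if P then x * y else 0)"
  "y * (if P then (x::complex) else 0) = (if P then y * x else 0)"
  "cnj (if P then (x::complex) else 0) = (if P then cnj x else 0)"
  by simp_all

lemma pair_index_less: "a < k \<Longrightarrow> p < d \<Longrightarrow> a*d+p < k*(d::nat)"
  using mult_le_mono1[of "Suc a" k d] by simp

lemma pair_index_eq_iff:
  "a < d \<Longrightarrow> b < (d::nat) \<Longrightarrow> i*d+a = j*d+b \<longleftrightarrow> i = j \<and> a = b"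
  by (metis div_mult_self1 div_less mod_mult_self1 mod_less add.commute add_0 less_zeroE)

lemma quad_index_less:
  "i < w \<Longrightarrow> j < x \<Longrightarrow> k < y \<Longrightarrow> l < (z::nat) \<Longrightarrow> ((i*x+j)*y+k)*z+l < w*x*y*z"
  by (intro pair_index_less) auto

lemma quad_index_cases:
  fixes r w x y z :: nat
  assumes "r < w*x*y*z"
  obtains i j k l where "i < w" "j < x" "k < y" "l < z" "r = ((i*x+j)*y+k)*z+l"
proof
  have "0 < z" "0 < y" "0 < x" using assms by (auto intro!: Nat.gr0I)
  then show "r mod z < z" "r div z mod y < y" "r div (z*y) mod x < x" "r div (z*y*x) < w"
    using assms by (auto simp: div_less_iff_less_mult mult_ac)
  have "r div (z*y) = r div (z*y*x) * x + r div (z*y) mod x"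
    by (simp add: div_mult2_eq)
  moreover have "r div z = r div (z*y) * y + r div z mod y"
    by (simp add: div_mult2_eq)
  ultimately show "r = ((r div (z*y*x) * x + r div (z*y) mod x) * y + r div z mod y) * z + r mod z"
    by simp
qed

section \<open>Positive semidefinite kernels\<close>

definition qform :: "nat \<Rightarrow> (nat \<Rightarrow> nat \<Rightarrow> complex) \<Rightarrow> (nat \<Rightarrow> complex) \<Rightarrow> complex" where
  "qform n A v = (\<Sum>i<n. \<Sum>j<n. cnj (v i) * A i j * v j)"

definition psd_kernel :: "nat \<Rightarrow> (nat \<Rightarrow> nat \<Rightarrow> complex) \<Rightarrow> bool" where
  "psd_kernel n A \<longleftrightarrow> (\<forall>v. 0 \<le> qform n A v)"

lemma psd_iff_psd_kernel: "psd d M \<longleftrightarrow> M \<in> carrier_mat d d \<and> psd_kernel d (\<lambda>i j. M $$ (i,j))"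
  unfolding psd_def psd_kernel_def qform_def
  by (auto simp: less_eq_complex_def complex_is_Real_iff)

lemma qform_cong:
  "(\<And>i j. i < n \<Longrightarrow> j < n \<Longrightarrow> A i j = B i j) \<Longrightarrow> (\<And>i. i < n \<Longrightarrow> v i = w i)
    \<Longrightarrow> qform n A v = qform n B w"
  unfolding qform_def by (intro sum.cong refl) auto

lemma psd_kernel_cong:
  "(\<And>i j. i < n \<Longrightarrow> j < n \<Longrightarrow> A i j = B i j) \<Longrightarrow> psd_kernel n A \<longleftrightarrow> psd_kernel n B"
  unfolding psd_kernel_def by (simp add: qform_cong[of n A B])

lemma mult_cnj_nonneg: "0 \<le> z * cnj z"
  by (simp add: complex_norm_square[symmetric] less_eq_complex_def)

lemma psd_kernel_gram: "psd_kernel n (\<lambda>i j. \<Sum>k\<in>K. W k i * cnj (W k j))"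
  unfolding psd_kernel_def
proof
  fix v
  define u where "u k = (\<Sum>i<n. cnj (v i) * W k i)" for k
  have "qform n (\<lambda>i j. \<Sum>k\<in>K. W k i * cnj (W k j)) v
      = (\<Sum>i<n. \<Sum>j<n. \<Sum>k\<in>K. cnj (v i) * W k i * cnj (cnj (v j) * W k j))"
    unfolding qform_def sum_distrib_left sum_distrib_right by (simp add: mult_ac)
  also have "\<dots> = (\<Sum>k\<in>K. \<Sum>i<n. \<Sum>j<n. cnj (v i) * W k i * cnj (cnj (v j) * W k j))"
    by (rule sum_rotate3)
  also have "\<dots> = (\<Sum>k\<in>K. u k * cnj (u k))"
    unfolding u_def by (simp add: cnj_sum sum_product)
  finally show "0 \<le> qform n (\<lambda>i j. \<Sum>k\<in>K. W k i * cnj (W k j)) v"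
    by (simp add: sum_nonneg mult_cnj_nonneg)
qed

lemma psd_kernel_scale: "0 \<le> c \<Longrightarrow> psd_kernel n A \<Longrightarrow> psd_kernel n (\<lambda>i j. c * A i j)"
proof -
  have "qform n (\<lambda>i j. c * A i j) v = c * qform n A v" for v
    unfolding qform_def sum_distrib_left by (simp add: mult_ac)
  then show "0 \<le> c \<Longrightarrow> psd_kernel n A \<Longrightarrow> psd_kernel n (\<lambda>i j. c * A i j)"
    unfolding psd_kernel_def by simp
qed

lemma qform_single:
  assumes "i < n"
  shows "qform n A (\<lambda>k. if k = i then x else 0) = cnj x * A i i * x"
  using assms by (simp add: qform_def if_zero_distrib sum.delta')

lemma qform_pair:
  assumes "i < n" "j < n" "i \<noteq> j"
  shows "qform n A (\<lambda>k. if k = i then x else if k = j then y else 0)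
     = cnj x * A i i * x + cnj x * A i j * y + cnj y * A j i * x + cnj y * A j j * y"
proof -
  have "(\<lambda>k. if k = i then x else if k = j then y else 0)
      = (\<lambda>k. (if k = i then x else 0) + (if k = j then y else 0))"
    using assms by auto
  then show ?thesis
    using assms by (simp add: qform_def distrib_left distrib_right sum.distrib
        if_zero_distrib sum.delta')
qed

lemma psd_kernel_diag_nonneg:
  assumes "psd_kernel n A" "i < n"
  shows "0 \<le> A i i"
proof -
  have "0 \<le> qform n A (\<lambda>k. if k = i then 1 else 0)"
    using assms(1) unfolding psd_kernel_def by blast
  then show ?thesis
    unfolding qform_single[OF assms(2)] by simp
qed

lemma psd_kernel_hermitian:
  assumes A: "psd_kernel n A" and "i < n" "j < n"
  shows "A j i = cnj (A i j)"
proof (cases "i = j")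
  case True
  then show ?thesis
    using psd_kernel_diag_nonneg[OF A \<open>i < n\<close>] by (simp add: less_eq_complex_def complex_eq_iff)
next
  case False
  have "0 \<le> A i i" "0 \<le> A j j"
    using psd_kernel_diag_nonneg assms by auto
  moreover have "0 \<le> A i i + A i j + A j i + A j j"
  proof -
    have "0 \<le> qform n A (\<lambda>k. if k = i then 1 else if k = j then 1 else 0)"
      using A unfolding psd_kernel_def by blast
    then show ?thesis
      unfolding qform_pair[OF assms(2,3) False] by simp
  qed
  moreover have "0 \<le> A i i + \<i> * A i j - \<i> * A j i + A j j"
  proof -
    have "0 \<le> qform n A (\<lambda>k. if k = i then 1 else if k = j then \<i> else 0)"
      using A unfolding psd_kernel_def by blast
    also have "qform n A (\<lambda>k. if k = i then 1 else if k = j then \<i> else 0)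
        = A i i + \<i> * A i j - \<i> * A j i + A j j"
      unfolding qform_pair[OF assms(2,3) False] by (simp add: algebra_simps)
    finally show ?thesis .
  qed
  ultimately show ?thesis
    by (auto simp: less_eq_complex_def complex_eq_iff)
qed

lemma psd_kernel_zero_diag_imp_zero_col:
  assumes A: "psd_kernel m A" and "i < m" "n < m" "A n n = 0"
  shows "A i n = 0"
proof (rule ccontr)
  assume ne: "A i n \<noteq> 0"
  then have "i \<noteq> n" using assms by auto
  \<comment> \<open>perturbing the unit vector at i in direction n makes the form negative\<close>
  define c where "c = (Re (A i i) + 1) / (2 * (cmod (A i n))^2)"
  define y where "y = - complex_of_real c * cnj (A i n)"
  have "0 \<le> qform m A (\<lambda>k. if k = i then 1 else if k = n then y else 0)"
    using A unfolding psd_kernel_def by blast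
  then have h: "0 \<le> A i i + A i n * y + cnj y * A n i"
    unfolding qform_pair[OF assms(2,3) \<open>i \<noteq> n\<close>] using assms(4) by simp
  have "A i n * y + cnj y * A n i = - 2 * complex_of_real c * (cmod (A i n))^2"
    unfolding y_def psd_kernel_hermitian[OF assms(1-3)]
    by (simp add: complex_norm_square[symmetric] algebra_simps)
  also have "\<dots> = - complex_of_real (Re (A i i) + 1)"
    using ne unfolding c_def by (simp add: field_simps)
  finally have "A i n * y + cnj y * A n i = - complex_of_real (Re (A i i) + 1)" .
  then have "0 \<le> A i i + - complex_of_real (Re (A i i) + 1)"
    using h unfolding add.assoc by simp
  then show False by (simp add: less_eq_complex_def)
qed

lemma psd_kernel_entry_through_last:
  assumes A: "psd_kernel (Suc n) A" and ij: "i < Suc n" "j < Suc n" "i = n \<or> j = n"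
  shows "A i j = A i n * A n j / A n n"
proof (cases "A n n = 0")
  case True
  \<comment> \<open>both sides vanish: the right one because x / 0 = 0\<close>
  then have "A i n = 0" "A n j = 0"
    using psd_kernel_zero_diag_imp_zero_col[OF A _ lessI True] psd_kernel_hermitian[OF A ij(2) lessI] ij
    by auto
  then show ?thesis using ij(3) by auto
next
  case False
  then show ?thesis using ij(3) by auto
qed

lemma qform_Suc:
  "qform (Suc n) A v = qform n A v + (\<Sum>i<n. cnj (v i) * A i n) * v n
     + cnj (v n) * (\<Sum>j<n. A n j * v j) + cnj (v n) * A n n * v n"
  unfolding qform_def
  by (simp add: sum.distrib sum_distrib_left sum_distrib_right algebra_simps)

lemma psd_kernel_restrict_Suc: "psd_kernel (Suc n) A \<Longrightarrow> psd_kernel n A"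
  unfolding psd_kernel_def
proof
  fix v assume "\<forall>v. 0 \<le> qform (Suc n) A v"
  then have "0 \<le> qform (Suc n) A (v(n := 0))" by blast
  also have "qform (Suc n) A (v(n := 0)) = qform n A v"
    unfolding qform_Suc by (simp add: qform_cong[of n A A "v(n := 0)" v])
  finally show "0 \<le> qform n A v" .
qed

lemma qform_schur_complement:
  "qform n (\<lambda>i j. A i j - A i n * A n j / c) v
     = qform n A v - (\<Sum>i<n. cnj (v i) * A i n) * (\<Sum>j<n. A n j * v j) / c"
proof -
  have "qform n (\<lambda>i j. A i j - A i n * A n j / c) v
      = qform n A v - (\<Sum>i<n. \<Sum>j<n. (cnj (v i) * A i n) * (A n j * v j) / c)"
    unfolding qform_def sum_subtractf[symmetric] by (simp add: algebra_simps)
  then show ?thesis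
    by (simp only: sum_product sum_divide_distrib)
qed

lemma psd_kernel_schur_complement:
  assumes A: "psd_kernel (Suc n) A"
  shows "psd_kernel n (\<lambda>i j. A i j - A i n * A n j / A n n)"
proof (cases "A n n = 0")
  case True
  \<comment> \<open>as x / 0 = 0, the complement is then just the restriction of A\<close>
  then show ?thesis using psd_kernel_restrict_Suc[OF A] by simp
next
  case False
  show ?thesis
    unfolding psd_kernel_def
  proof
    fix v
    define s where "s = (\<Sum>j<n. A n j * v j)"
    define s' where "s' = (\<Sum>i<n. cnj (v i) * A i n)"
    define t where "t = - s / A n n"
    \<comment> \<open>minimising the form over the last coordinate leaves the Schur complement\<close>
    have "0 \<le> qform (Suc n) A (v(n := t))"
      using A unfolding psd_kernel_def by blast
    also have "qform (Suc n) A (v(n := t)) = qform n A v + s' * t + cnj t * (s + A n n * t)"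
      unfolding qform_Suc s_def s'_def
      by (simp add: qform_cong[of n A A "v(n := t)" v] algebra_simps)
    also have "\<dots> = qform n (\<lambda>i j. A i j - A i n * A n j / A n n) v"
      unfolding qform_schur_complement s_def[symmetric] s'_def[symmetric] t_def
      using False by simp
    finally show "0 \<le> qform n (\<lambda>i j. A i j - A i n * A n j / A n n) v" .
  qed
qed

lemma psd_kernel_gram_decomposition:
  "psd_kernel n A \<Longrightarrow> \<exists>W. \<forall>i<n. \<forall>j<n. A i j = (\<Sum>k<n. W k i * cnj (W k j))"
proof (induction n arbitrary: A)
  case 0
  then show ?case by simp
next
  case (Suc n)
  obtain W' where W': "\<forall>i<n. \<forall>j<n. A i j - A i n * A n j / A n n = (\<Sum>k<n. W' k i * cnj (W' k j))"
    using Suc.IH[OF psd_kernel_schur_complement[OF Suc.prems]] by blast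
  have herm: "\<And>i j. i < Suc n \<Longrightarrow> j < Suc n \<Longrightarrow> A j i = cnj (A i j)"
    using psd_kernel_hermitian[OF Suc.prems] by blast
  have "0 \<le> A n n" using psd_kernel_diag_nonneg[OF Suc.prems] by simp
  then have Ann: "A n n = complex_of_real (Re (A n n))" "0 \<le> Re (A n n)"
    by (simp_all add: less_eq_complex_def complex_eq_iff)
  define r where "r = complex_of_real (sqrt (Re (A n n)))"
  have "r * r = complex_of_real (Re (A n n))"
    unfolding r_def of_real_mult[symmetric] using Ann(2) by simp
  then have r: "cnj r = r" "r * r = A n n"
    using Ann(1) by (simp_all add: r_def)
  define W where "W k i = (if k < n then (if i < n then W' k i else 0) else A i n / r)" for k i
  show ?case
  proof (intro exI allI impI)
    fix i j assume ij: "i < Suc n" "j < Suc n"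
    have "W n i * cnj (W n j) = A i n * A n j / A n n"
      unfolding W_def using herm[OF ij(2) lessI] r by simp
    then have sum_W: "(\<Sum>k<Suc n. W k i * cnj (W k j))
        = (if i < n \<and> j < n then A i j - A i n * A n j / A n n else 0) + A i n * A n j / A n n"
      using W' by (auto simp: W_def)
    show "A i j = (\<Sum>k<Suc n. W k i * cnj (W k j))"
    proof (cases "i < n \<and> j < n")
      case True
      then show ?thesis unfolding sum_W by simp
    next
      case False
      then show ?thesis
        unfolding sum_W using psd_kernel_entry_through_last[OF Suc.prems ij] ij by auto
    qed
  qed
qed

lemma psd_kernel_reindex:
  assumes "psd_kernel m A" "\<And>i. i < n \<Longrightarrow> f i < m"
  shows "psd_kernel n (\<lambda>i j. A (f i) (f j))"
proof -
  obtain W where "\<forall>i<m. \<forall>j<m. A i j = (\<Sum>k<m. W k i * cnj (W k j))"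
    using psd_kernel_gram_decomposition[OF assms(1)] by blast
  then have "psd_kernel n (\<lambda>i j. A (f i) (f j)) \<longleftrightarrow> psd_kernel n (\<lambda>i j. \<Sum>k<m. W k (f i) * cnj (W k (f j)))"
    using assms(2) by (intro psd_kernel_cong) auto
  then show ?thesis using psd_kernel_gram[of n "\<lambda>k i. W k (f i)" "{..<m}"] by simp
qed

lemma psd_kernel_reindex_bij_iff:
  assumes f: "bij_betw f {..<n} {..<n}"
  shows "psd_kernel n (\<lambda>i j. A (f i) (f j)) \<longleftrightarrow> psd_kernel n A"
proof
  define g where "g = the_inv_into {..<n} f"
  have "bij_betw g {..<n} {..<n}"
    unfolding g_def by (rule bij_betw_the_inv_into[OF f])
  then have g: "g i < n" "f (g i) = i" if "i < n" for i
    using that f unfolding g_def by (auto dest: bij_betwE simp: f_the_inv_into_f_bij_betw)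
  assume "psd_kernel n (\<lambda>i j. A (f i) (f j))"
  from psd_kernel_reindex[OF this g(1)]
  have "psd_kernel n (\<lambda>i j. A (f (g i)) (f (g j)))" .
  moreover have "psd_kernel n (\<lambda>i j. A (f (g i)) (f (g j))) \<longleftrightarrow> psd_kernel n A"
    by (rule psd_kernel_cong) (simp add: g(2))
  ultimately show "psd_kernel n A" by blast
next
  assume "psd_kernel n A"
  then show "psd_kernel n (\<lambda>i j. A (f i) (f j))"
    by (rule psd_kernel_reindex) (use f in \<open>auto dest: bij_betwE\<close>)
qed

lemma psd_reindex_bij_iff:
  assumes f: "bij_betw f {..<n} {..<n}" and M: "M \<in> carrier_mat n n"
  shows "psd n (mat n n (\<lambda>(r,c). M $$ (f r, f c))) \<longleftrightarrow> psd n M"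
proof -
  have "psd_kernel n (\<lambda>i j. mat n n (\<lambda>(r,c). M $$ (f r, f c)) $$ (i,j))
      \<longleftrightarrow> psd_kernel n (\<lambda>i j. M $$ (f i, f j))"
    by (rule psd_kernel_cong) simp
  moreover have "psd_kernel n (\<lambda>i j. M $$ (f i, f j)) \<longleftrightarrow> psd_kernel n (\<lambda>i j. M $$ (i, j))"
    using psd_kernel_reindex_bij_iff[OF f, of "\<lambda>i j. M $$ (i, j)"] .
  ultimately show ?thesis
    unfolding psd_iff_psd_kernel using M by auto
qed

lemma psd_kernel_partial_trace:
  assumes "psd_kernel (dX*dY) R"
  shows "psd_kernel dY (\<lambda>i j. \<Sum>a<dX. R (a*dY+i) (a*dY+j))"
proof -
  obtain Y where Y: "\<forall>x<dX*dY. \<forall>y<dX*dY. R x y = (\<Sum>l<dX*dY. Y l x * cnj (Y l y))"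
    using psd_kernel_gram_decomposition[OF assms] by blast
  have "(\<Sum>a<dX. R (a*dY+i) (a*dY+j))
      = (\<Sum>p\<in>{..<dX}\<times>{..<dX*dY}. Y (snd p) (fst p*dY+i) * cnj (Y (snd p) (fst p*dY+j)))"
    if "i < dY" "j < dY" for i j
    using that Y by (simp add: sum.cartesian_product' pair_index_less)
  then show ?thesis
    using psd_kernel_gram[of dY "\<lambda>p i. Y (snd p) (fst p*dY+i)" "{..<dX}\<times>{..<dX*dY}"]
    by (subst psd_kernel_cong) auto
qed

lemma psd_ptrace1: "psd (dX*dY) \<rho> \<Longrightarrow> psd dY (ptrace1 dX dY \<rho>)"
  unfolding psd_iff_psd_kernel ptrace1_def
  by (auto dest: psd_kernel_partial_trace
      intro: psd_kernel_cong[THEN iffD1, of _ "\<lambda>i j. \<Sum>a<dX. \<rho> $$ (a*dY+i, a*dY+j)"])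

lemma psd_kernel_link_product:
  assumes R: "psd_kernel (k*din) R" and J: "psd_kernel (din*dout) J"
  shows "psd_kernel (k*dout) (\<lambda>r c. \<Sum>i<din. \<Sum>j<din.
           R ((r div dout)*din+i) ((c div dout)*din+j) * J (i*dout + r mod dout) (j*dout + c mod dout))"
proof -
  obtain Y where Y: "\<forall>x<k*din. \<forall>y<k*din. R x y = (\<Sum>l<k*din. Y l x * cnj (Y l y))"
    using psd_kernel_gram_decomposition[OF R] by blast
  obtain Z where Z: "\<forall>x<din*dout. \<forall>y<din*dout. J x y = (\<Sum>m<din*dout. Z m x * cnj (Z m y))"
    using psd_kernel_gram_decomposition[OF J] by blast
  \<comment> \<open>products of Gram vectors of R and J are Gram vectors of the contraction\<close>
  define K where "K = {..<k*din} \<times> {..<din*dout}"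
  define T where "T p r i = Y (fst p) ((r div dout)*din+i) * Z (snd p) (i*dout + r mod dout)" for p r i
  have "(\<Sum>i<din. \<Sum>j<din.
           R ((r div dout)*din+i) ((c div dout)*din+j) * J (i*dout + r mod dout) (j*dout + c mod dout))
      = (\<Sum>p\<in>K. (\<Sum>i<din. T p r i) * cnj (\<Sum>j<din. T p c j))"
    if rc: "r < k*dout" "c < k*dout" for r c
  proof -
    have "0 < dout" using rc by (cases "dout = 0") auto
    then have bounds: "(x div dout)*din+i < k*din" "i*dout + x mod dout < din*dout"
      if "x < k*dout" "i < din" for x i
      using that by (auto intro!: pair_index_less simp: div_less_iff_less_mult)
    have "(\<Sum>i<din. \<Sum>j<din.
           R ((r div dout)*din+i) ((c div dout)*din+j) * J (i*dout + r mod dout) (j*dout + c mod dout))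
        = (\<Sum>i<din. \<Sum>j<din. \<Sum>p\<in>K. T p r i * cnj (T p c j))"
      unfolding K_def T_def using Y Z bounds rc
      by (intro sum.cong refl) (simp add: sum.cartesian_product' sum_product mult_ac)
    also have "\<dots> = (\<Sum>p\<in>K. \<Sum>i<din. \<Sum>j<din. T p r i * cnj (T p c j))"
      by (rule sum_rotate3)
    also have "\<dots> = (\<Sum>p\<in>K. (\<Sum>i<din. T p r i) * cnj (\<Sum>j<din. T p c j))"
      by (simp add: cnj_sum sum_product)
    finally show ?thesis .
  qed
  then show ?thesis
    using psd_kernel_gram[of "k*dout" "\<lambda>p r. \<Sum>i<din. T p r i" K]
    by (subst psd_kernel_cong) auto
qed

section \<open>Linear maps and Choi matrices\<close>

lemma mat_unit_carrier [simp]: "mat_unit d i j \<in> carrier_mat d d"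
  unfolding mat_unit_def by simp

lemma mtrace_mat_unit: "i < d \<Longrightarrow> mtrace (mat_unit d i j) = (if i = j then 1 else 0)"
  unfolding mtrace_def mat_unit_def by (cases "i = j") (auto simp: sum.delta intro: sum.neutral)

lemma mtrace_carrier: "X \<in> carrier_mat d d \<Longrightarrow> mtrace X = (\<Sum>i<d. X $$ (i,i))"
  unfolding mtrace_def by auto

lemma mtrace_add:
  assumes "X \<in> carrier_mat d d" "Y \<in> carrier_mat d d"
  shows "mtrace (X + Y) = mtrace X + mtrace Y"
proof -
  have "X + Y \<in> carrier_mat d d" using assms by simp
  then show ?thesis
    using assms by (simp add: mtrace_carrier[of _ d] sum.distrib)
qed

lemma mtrace_smult:
  assumes "X \<in> carrier_mat d d"
  shows "mtrace (c \<cdot>\<^sub>m X) = c * mtrace X"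
proof -
  have "c \<cdot>\<^sub>m X \<in> carrier_mat d d" using assms by simp
  then show ?thesis
    using assms by (simp add: mtrace_carrier[of _ d] sum_distrib_left)
qed

lemma smult_smult_mat: "a \<cdot>\<^sub>m (b \<cdot>\<^sub>m B) = (a * b :: complex) \<cdot>\<^sub>m B"
  by (intro eq_matI) auto

lemma block_of_carrier [simp]: "block_of d X a b \<in> carrier_mat d d"
  unfolding block_of_def by simp

lemma block_of_index: "i < d \<Longrightarrow> j < d \<Longrightarrow> block_of d X a b $$ (i,j) = X $$ (a*d+i, b*d+j)"
  unfolding block_of_def by simp

lemma block_of_add:
  assumes "X \<in> carrier_mat (k*d) (k*d)" "Y \<in> carrier_mat (k*d) (k*d)" "a < k" "b < k"
  shows "block_of d (X + Y) a b = block_of d X a b + block_of d Y a b"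
  using assms by (intro eq_matI) (auto simp: block_of_def pair_index_less)

lemma block_of_smult:
  assumes "X \<in> carrier_mat (k*d) (k*d)" "a < k" "b < k"
  shows "block_of d (c \<cdot>\<^sub>m X) a b = c \<cdot>\<^sub>m block_of d X a b"
  using assms by (intro eq_matI) (auto simp: block_of_def pair_index_less)

lemma linear_map_on_carrier:
  "linear_map_on din dout L \<Longrightarrow> X \<in> carrier_mat din din \<Longrightarrow> L X \<in> carrier_mat dout dout"
  unfolding linear_map_on_def by blast

lemma linear_map_on_add:
  "linear_map_on din dout L \<Longrightarrow> X \<in> carrier_mat din din \<Longrightarrow> Y \<in> carrier_mat din din
    \<Longrightarrow> L (X + Y) = L X + L Y"
  unfolding linear_map_on_def by blast

lemma linear_map_on_smult:
  "linear_map_on din dout L \<Longrightarrow> X \<in> carrier_mat din din \<Longrightarrow> L (c \<cdot>\<^sub>m X) = c \<cdot>\<^sub>m L X"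
  unfolding linear_map_on_def by blast

lemma linear_map_on_zero:
  assumes L: "linear_map_on din dout L"
  shows "L (0\<^sub>m din din) = 0\<^sub>m dout dout"
proof -
  have "0\<^sub>m din din = (0::complex) \<cdot>\<^sub>m 0\<^sub>m din din" by (intro eq_matI) auto
  then have "L (0\<^sub>m din din) = 0 \<cdot>\<^sub>m L (0\<^sub>m din din)"
    using linear_map_on_smult[OF L, of "0\<^sub>m din din" 0] by simp
  also have "\<dots> = 0\<^sub>m dout dout"
    using linear_map_on_carrier[OF L, of "0\<^sub>m din din"] by (intro eq_matI) auto
  finally show ?thesis .
qed

lemma linear_map_on_entry_restrict:
  assumes L: "linear_map_on din dout L" and "finite S" "S \<subseteq> {..<din} \<times> {..<din}"
    and pq: "p < dout" "q < dout"
  shows "L (mat din din (\<lambda>(i,j). if (i,j) \<in> S then X $$ (i,j) else 0)) $$ (p,q)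
     = (\<Sum>(i,j)\<in>S. X $$ (i,j) * L (mat_unit din i j) $$ (p,q))"
  using assms(2,3)
proof (induction S rule: finite_induct)
  case empty
  have "mat din din (\<lambda>(i,j). if (i,j) \<in> {} then X $$ (i,j) else 0) = 0\<^sub>m din din"
    by (intro eq_matI) auto
  then have z: "L (mat din din (\<lambda>(i,j). if (i,j) \<in> {} then X $$ (i,j) else 0)) = 0\<^sub>m dout dout"
    using linear_map_on_zero[OF L] by simp
  show ?case unfolding z using pq by simp
next
  case (insert s S)
  obtain i0 j0 where s: "s = (i0, j0)" "i0 < din" "j0 < din"
    using insert.prems by (cases s) auto
  define M where "M = mat din din (\<lambda>(i,j). if (i,j) \<in> S then X $$ (i,j) else 0)"
  have M: "M \<in> carrier_mat din din" unfolding M_def by simp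
  have "mat din din (\<lambda>(i,j). if (i,j) \<in> insert s S then X $$ (i,j) else 0)
      = M + X $$ (i0,j0) \<cdot>\<^sub>m mat_unit din i0 j0"
    using insert.hyps(2) s unfolding M_def mat_unit_def by (intro eq_matI) auto
  moreover have "L M \<in> carrier_mat dout dout" "L (mat_unit din i0 j0) \<in> carrier_mat dout dout"
    using linear_map_on_carrier[OF L] M by auto
  ultimately have "L (mat din din (\<lambda>(i,j). if (i,j) \<in> insert s S then X $$ (i,j) else 0)) $$ (p,q)
      = L M $$ (p,q) + X $$ (i0,j0) * L (mat_unit din i0 j0) $$ (p,q)"
    using linear_map_on_add[OF L M] linear_map_on_smult[OF L mat_unit_carrier] pq
    by (simp del: insert_iff)
  also have "L M $$ (p,q) = (\<Sum>(i,j)\<in>S. X $$ (i,j) * L (mat_unit din i j) $$ (p,q))"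
    unfolding M_def by (rule insert.IH) (use insert.prems in blast)
  finally show ?case
    using insert.hyps s by (simp add: add.commute)
qed

lemma linear_map_on_entry:
  assumes L: "linear_map_on din dout L" and X: "X \<in> carrier_mat din din"
    and "p < dout" "q < dout"
  shows "L X $$ (p,q) = (\<Sum>i<din. \<Sum>j<din. X $$ (i,j) * L (mat_unit din i j) $$ (p,q))"
proof -
  have "X = mat din din (\<lambda>(i,j). if (i,j) \<in> {..<din} \<times> {..<din} then X $$ (i,j) else 0)"
    using X by (intro eq_matI) auto
  then have "L X $$ (p,q) = (\<Sum>(i,j)\<in>{..<din} \<times> {..<din}. X $$ (i,j) * L (mat_unit din i j) $$ (p,q))"
    using linear_map_on_entry_restrict[OF L _ _ assms(3,4), of "{..<din} \<times> {..<din}" X] by simp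
  then show ?thesis by (simp add: sum.cartesian_product)
qed

lemma id_tensor_map_entry:
  assumes L: "linear_map_on din dout L" and rc: "r < k*dout" "c < k*dout"
  shows "id_tensor_map k din dout L \<rho> $$ (r,c)
     = (\<Sum>i<din. \<Sum>j<din. \<rho> $$ ((r div dout)*din+i, (c div dout)*din+j)
          * L (mat_unit din i j) $$ (r mod dout, c mod dout))"
proof -
  have "0 < dout" using rc by (cases "dout = 0") auto
  then show ?thesis
    unfolding id_tensor_map_def using rc
    by (simp add: linear_map_on_entry[OF L block_of_carrier] block_of_index)
qed

definition choi :: "nat \<Rightarrow> nat \<Rightarrow> (complex mat \<Rightarrow> complex mat) \<Rightarrow> complex mat" where
  "choi din dout L = id_tensor_map din din dout L (max_ent din)"

lemma choi_carrier [simp]: "choi din dout L \<in> carrier_mat (din*dout) (din*dout)"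
  unfolding choi_def id_tensor_map_def by simp

lemma choi_dims [simp]: "dim_row (choi din dout L) = din*dout" "dim_col (choi din dout L) = din*dout"
  using carrier_matD[OF choi_carrier] by simp_all

lemma block_of_max_ent:
  assumes "i < d" "j < d"
  shows "block_of d (max_ent d) i j = (1 / of_nat d) \<cdot>\<^sub>m mat_unit d i j"
  using assms by (intro eq_matI) (auto simp: block_of_def max_ent_def mat_unit_def pair_index_less)

lemma choi_entry:
  assumes L: "linear_map_on din dout L" and "i < din" "j < din" "p < dout" "q < dout"
  shows "choi din dout L $$ (i*dout+p, j*dout+q) = L (mat_unit din i j) $$ (p,q) / of_nat din"
proof -
  have "L (mat_unit din i j) \<in> carrier_mat dout dout"
    by (rule linear_map_on_carrier[OF L mat_unit_carrier])
  then show ?thesis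
    unfolding choi_def id_tensor_map_def using assms
    by (simp add: pair_index_less block_of_max_ent linear_map_on_smult[OF L mat_unit_carrier])
qed

theorem psd_id_tensor_map_if_psd_choi:
  assumes L: "linear_map_on din dout L" and C: "psd (din*dout) (choi din dout L)"
    and R: "psd (k*din) \<rho>"
  shows "psd (k*dout) (id_tensor_map k din dout L \<rho>)"
proof -
  have "psd_kernel (din*dout) (\<lambda>x y. of_nat din * choi din dout L $$ (x,y))"
    using C by (intro psd_kernel_scale) (auto simp: psd_iff_psd_kernel less_eq_complex_def)
  with R have "psd_kernel (k*dout) (\<lambda>r c. \<Sum>i<din. \<Sum>j<din. \<rho> $$ ((r div dout)*din+i, (c div dout)*din+j)
      * (of_nat din * choi din dout L $$ (i*dout + r mod dout, j*dout + c mod dout)))"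
    by (intro psd_kernel_link_product) (auto simp: psd_iff_psd_kernel)
  moreover have "id_tensor_map k din dout L \<rho> $$ (r,c) = (\<Sum>i<din. \<Sum>j<din.
      \<rho> $$ ((r div dout)*din+i, (c div dout)*din+j)
      * (of_nat din * choi din dout L $$ (i*dout + r mod dout, j*dout + c mod dout)))"
    if "r < k*dout" "c < k*dout" for r c
  proof -
    have "0 < dout" using that by (cases "dout = 0") auto
    then show ?thesis
      unfolding id_tensor_map_entry[OF L that] by (intro sum.cong refl) (simp add: choi_entry[OF L])
  qed
  ultimately show ?thesis
    unfolding psd_iff_psd_kernel by (subst psd_kernel_cong) (auto simp: id_tensor_map_def)
qed

lemma max_ent_psd: "psd (d*d) (max_ent d)"
proof -
  define w where "w i = (if i div d = i mod d then complex_of_real (1 / sqrt (real d)) else 0)" for i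
  have "complex_of_real (1 / sqrt (real d)) * cnj (complex_of_real (1 / sqrt (real d))) = 1 / of_nat d"
    by (simp flip: of_real_mult)
  then have "max_ent d $$ (i,j) = (\<Sum>k\<in>{()}. w i * cnj (w j))" if "i < d*d" "j < d*d" for i j
    using that by (simp add: max_ent_def w_def)
  then show ?thesis
    unfolding psd_iff_psd_kernel using psd_kernel_gram[of "d*d" "\<lambda>_. w" "{()}"]
    by (subst psd_kernel_cong) (auto simp: max_ent_def)
qed

lemma max_ent_density: "0 < d \<Longrightarrow> max_ent d \<in> density_ops (d*d)"
  unfolding density_ops_def using max_ent_psd
  by (simp add: mtrace_def max_ent_def
      sum_lessThan_mult[where f = "\<lambda>r. if r div d = r mod d then 1 / of_nat d else 0"])

lemma psd_choi_if_completely_positive: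
  "completely_positive din dout L \<Longrightarrow> 0 < din \<Longrightarrow> psd (din*dout) (choi din dout L)"
  unfolding completely_positive_def choi_def using max_ent_psd by blast

lemma channels_linear: "Q \<in> channels din dout \<Longrightarrow> linear_map_on din dout Q"
  unfolding channels_def completely_positive_def by blast

lemma channels_completely_positive: "Q \<in> channels din dout \<Longrightarrow> completely_positive din dout Q"
  unfolding channels_def by blast

lemma channels_trace: "Q \<in> channels din dout \<Longrightarrow> X \<in> carrier_mat din din \<Longrightarrow> mtrace (Q X) = mtrace X"
  unfolding channels_def by blast

lemma choi_block_trace:
  assumes Q: "Q \<in> channels din dout" and "x < din" "y < din"
  shows "(\<Sum>q<dout. choi din dout Q $$ (x*dout+q, y*dout+q)) = (if x = y then 1 / of_nat din else 0)"
proof -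
  have L: "linear_map_on din dout Q" by (rule channels_linear[OF Q])
  have "(\<Sum>q<dout. choi din dout Q $$ (x*dout+q, y*dout+q)) = mtrace (Q (mat_unit din x y)) / of_nat din"
    by (simp add: choi_entry[OF L assms(2,3)] sum_divide_distrib
        mtrace_carrier[OF linear_map_on_carrier[OF L mat_unit_carrier]])
  then show ?thesis
    using assms by (simp add: channels_trace[OF Q mat_unit_carrier] mtrace_mat_unit)
qed

lemma choi_density:
  assumes Q: "Q \<in> channels din dout" and "0 < din"
  shows "choi din dout Q \<in> density_ops (din*dout)"
proof -
  have "mtrace (choi din dout Q) = (\<Sum>x<din. \<Sum>q<dout. choi din dout Q $$ (x*dout+q, x*dout+q))"
    by (simp add: mtrace_def sum_lessThan_mult)
  also have "\<dots> = 1"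
    using assms by (simp add: choi_block_trace)
  finally show ?thesis
    unfolding density_ops_def
    using psd_choi_if_completely_positive[OF channels_completely_positive[OF Q] assms(2)] by simp
qed

section \<open>Max-divergence\<close>

lemma elog2_mono: "0 \<le> x \<Longrightarrow> x \<le> y \<Longrightarrow> elog2 x \<le> elog2 y"
  unfolding elog2_def by auto

lemma Dmax_mono:
  assumes "\<And>t. 0 \<le> t \<Longrightarrow> loewner_le d' \<rho>' (complex_of_real t \<cdot>\<^sub>m \<sigma>')
             \<Longrightarrow> loewner_le d \<rho> (complex_of_real t \<cdot>\<^sub>m \<sigma>)"
  shows "Dmax d \<rho> \<sigma> \<le> Dmax d' \<rho>' \<sigma>'"
proof -
  define L where "L = {t. 0 \<le> t \<and> loewner_le d \<rho> (complex_of_real t \<cdot>\<^sub>m \<sigma>)}"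
  define L' where "L' = {t. 0 \<le> t \<and> loewner_le d' \<rho>' (complex_of_real t \<cdot>\<^sub>m \<sigma>')}"
  have D: "Dmax d \<rho> \<sigma> = (if L = {} then \<infinity> else elog2 (Inf L))"
    "Dmax d' \<rho>' \<sigma>' = (if L' = {} then \<infinity> else elog2 (Inf L'))"
    unfolding Dmax_def L_def L'_def Let_def by (rule refl)+
  have sub: "L' \<subseteq> L" using assms unfolding L_def L'_def by auto
  show ?thesis
  proof (cases "L' = {}")
    case True
    then show ?thesis unfolding D by simp
  next
    case False
    then have "L \<noteq> {}" using sub by blast
    moreover have "Inf L \<le> Inf L'"
      by (rule cInf_superset_mono[OF False _ sub]) (auto simp: L_def intro!: bdd_belowI[of _ 0])
    moreover have "0 \<le> Inf L"
      using \<open>L \<noteq> {}\<close> unfolding L_def by (intro cInf_greatest) auto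
    ultimately show ?thesis unfolding D using False by (simp add: elog2_mono)
  qed
qed

lemma Dmax_smult_right:
  assumes c: "0 < c"
  shows "Dmax n A (complex_of_real c \<cdot>\<^sub>m B) = Dmax n A B - ereal (log 2 c)"
proof -
  define L where "L = {t. 0 \<le> t \<and> loewner_le n A (complex_of_real t \<cdot>\<^sub>m B)}"
  have "{t. 0 \<le> t \<and> loewner_le n A (complex_of_real t \<cdot>\<^sub>m (complex_of_real c \<cdot>\<^sub>m B))}
      = (\<lambda>t. t / c) ` L"
  proof -
    have "t \<in> (\<lambda>t. t / c) ` L \<longleftrightarrow> t * c \<in> L" for t
      using c by (auto simp: image_iff intro: bexI[of _ "t * c"])
    then show ?thesis
      unfolding L_def using c by (auto simp: smult_smult_mat zero_le_mult_iff mult.commute)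
  qed
  then have D: "Dmax n A B = (if L = {} then \<infinity> else elog2 (Inf L))"
    "Dmax n A (complex_of_real c \<cdot>\<^sub>m B)
       = (if L = {} then \<infinity> else elog2 (Inf ((\<lambda>t. t / c) ` L)))"
    unfolding Dmax_def Let_def L_def[symmetric] by simp_all
  show ?thesis
  proof (cases "L = {}")
    case True
    then show ?thesis unfolding D by simp
  next
    case False
    have "bdd_below L" unfolding L_def by (auto intro!: bdd_belowI[of _ 0])
    moreover have "continuous (at_right (Inf L)) (\<lambda>t. t / c)"
      using c by (intro continuous_intros) auto
    ultimately have "Inf ((\<lambda>t. t / c) ` L) = Inf L / c"
      using continuous_at_Inf_mono[of "\<lambda>t. t / c" L] c False
      by (auto simp: mono_def divide_right_mono)
    moreover have "0 \<le> Inf L"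
      using False unfolding L_def by (intro cInf_greatest) auto
    ultimately show ?thesis
      unfolding D using False c by (auto simp: elog2_def log_divide)
  qed
qed

lemma Dmax_reindex_bij:
  assumes f: "bij_betw f {..<n} {..<n}" and A: "A \<in> carrier_mat n n" and B: "B \<in> carrier_mat n n"
  shows "Dmax n (mat n n (\<lambda>(r,c). A $$ (f r, f c))) (mat n n (\<lambda>(r,c). B $$ (f r, f c))) = Dmax n A B"
proof -
  have f_less: "f i < n" if "i < n" for i using f that by (auto dest: bij_betwE)
  have "loewner_le n (mat n n (\<lambda>(r,c). A $$ (f r, f c))) (t \<cdot>\<^sub>m mat n n (\<lambda>(r,c). B $$ (f r, f c)))
     \<longleftrightarrow> loewner_le n A (t \<cdot>\<^sub>m B)" for t
  proof -
    have "t \<cdot>\<^sub>m mat n n (\<lambda>(r,c). B $$ (f r, f c)) - mat n n (\<lambda>(r,c). A $$ (f r, f c))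
        = mat n n (\<lambda>(r,c). (t \<cdot>\<^sub>m B - A) $$ (f r, f c))"
      using A B f_less by (intro eq_matI) auto
    moreover have "t \<cdot>\<^sub>m B - A \<in> carrier_mat n n" using A B by auto
    ultimately show ?thesis
      unfolding loewner_le_def using psd_reindex_bij_iff[OF f] A B by auto
  qed
  then show ?thesis unfolding Dmax_def by simp
qed

lemma linear_map_on_smult_diff:
  assumes N: "linear_map_on din dout N" and M: "linear_map_on din dout M"
  shows "linear_map_on din dout (\<lambda>X. c \<cdot>\<^sub>m M X - N X)"
proof -
  have MN: "M X \<in> carrier_mat dout dout" "N X \<in> carrier_mat dout dout"
    if "X \<in> carrier_mat din din" for X
    using linear_map_on_carrier[OF M that] linear_map_on_carrier[OF N that] by auto
  show ?thesis
    unfolding linear_map_on_def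
  proof (intro conjI ballI allI)
    fix X Y :: "complex mat" and a :: complex
    assume X: "X \<in> carrier_mat din din" and Y: "Y \<in> carrier_mat din din"
    show "c \<cdot>\<^sub>m M X - N X \<in> carrier_mat dout dout"
      using MN[OF X] by auto
    show "c \<cdot>\<^sub>m M (X + Y) - N (X + Y) = c \<cdot>\<^sub>m M X - N X + (c \<cdot>\<^sub>m M Y - N Y)"
      unfolding linear_map_on_add[OF M X Y] linear_map_on_add[OF N X Y] using MN[OF X] MN[OF Y]
      by (intro eq_matI) (auto simp: algebra_simps)
    show "c \<cdot>\<^sub>m M (a \<cdot>\<^sub>m X) - N (a \<cdot>\<^sub>m X) = a \<cdot>\<^sub>m (c \<cdot>\<^sub>m M X - N X)"
      unfolding linear_map_on_smult[OF M X] linear_map_on_smult[OF N X] using MN[OF X]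
      by (intro eq_matI) (auto simp: algebra_simps)
  qed
qed

lemma id_tensor_map_smult_diff:
  assumes N: "linear_map_on din dout N" and M: "linear_map_on din dout M"
  shows "id_tensor_map k din dout (\<lambda>X. c \<cdot>\<^sub>m M X - N X) \<rho>
     = c \<cdot>\<^sub>m id_tensor_map k din dout M \<rho> - id_tensor_map k din dout N \<rho>"
proof (intro eq_matI)
  fix r s assume "r < dim_row (c \<cdot>\<^sub>m id_tensor_map k din dout M \<rho> - id_tensor_map k din dout N \<rho>)"
    "s < dim_col (c \<cdot>\<^sub>m id_tensor_map k din dout M \<rho> - id_tensor_map k din dout N \<rho>)"
  then have rs: "r < k*dout" "s < k*dout" unfolding id_tensor_map_def by auto
  then have "0 < dout" by (cases "dout = 0") auto
  moreover have "dim_row (M (block_of din \<rho> a b)) = dout" "dim_col (M (block_of din \<rho> a b)) = dout"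
    "dim_row (N (block_of din \<rho> a b)) = dout" "dim_col (N (block_of din \<rho> a b)) = dout" for a b
    using carrier_matD[OF linear_map_on_carrier[OF M block_of_carrier]]
      carrier_matD[OF linear_map_on_carrier[OF N block_of_carrier]] by simp_all
  ultimately show "id_tensor_map k din dout (\<lambda>X. c \<cdot>\<^sub>m M X - N X) \<rho> $$ (r,s)
      = (c \<cdot>\<^sub>m id_tensor_map k din dout M \<rho> - id_tensor_map k din dout N \<rho>) $$ (r,s)"
    unfolding id_tensor_map_def using rs by simp
qed (simp_all add: id_tensor_map_def)

theorem Dmax_ch_eq_Dmax_choi:
  assumes N: "linear_map_on din dout N" and M: "linear_map_on din dout M" and "0 < din"
  shows "Dmax_ch din dout N M = Dmax (din*dout) (choi din dout N) (choi din dout M)"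
proof (rule antisym)
  show "Dmax_ch din dout N M \<le> Dmax (din*dout) (choi din dout N) (choi din dout M)"
    unfolding Dmax_ch_def
  proof (rule SUP_least)
    fix p assume "p \<in> {(k, \<rho>). 0 < k \<and> \<rho> \<in> density_ops (k * din)}"
    then obtain k \<rho> where p: "p = (k, \<rho>)" and \<rho>: "psd (k*din) \<rho>"
      unfolding density_ops_def by auto
    show "Dmax (fst p * dout) (id_tensor_map (fst p) din dout N (snd p))
        (id_tensor_map (fst p) din dout M (snd p)) \<le> Dmax (din*dout) (choi din dout N) (choi din dout M)"
      unfolding p fst_conv snd_conv
    proof (rule Dmax_mono)
      fix t :: real
      assume "loewner_le (din*dout) (choi din dout N) (complex_of_real t \<cdot>\<^sub>m choi din dout M)"
      \<comment> \<open>Choi's theorem, applied to the linear map t M - N\<close>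
      then have "psd (din*dout) (choi din dout (\<lambda>X. complex_of_real t \<cdot>\<^sub>m M X - N X))"
        unfolding loewner_le_def choi_def id_tensor_map_smult_diff[OF N M] by simp
      from psd_id_tensor_map_if_psd_choi[OF linear_map_on_smult_diff[OF N M] this \<rho>]
      show "loewner_le (k*dout) (id_tensor_map k din dout N \<rho>)
          (complex_of_real t \<cdot>\<^sub>m id_tensor_map k din dout M \<rho>)"
        unfolding loewner_le_def id_tensor_map_smult_diff[OF N M] by (simp add: id_tensor_map_def)
    qed
  qed
  show "Dmax (din*dout) (choi din dout N) (choi din dout M) \<le> Dmax_ch din dout N M"
    unfolding Dmax_ch_def choi_def
    by (rule SUP_upper2[where i = "(din, max_ent din)"]) (use max_ent_density assms(3) in auto)
qed

section \<open>The Choi state of a bipartite channel\<close>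

lemma choi_reindex_quad_index:
  fixes i j k l w x y z :: nat
  assumes "j < x" "k < y" "l < z"
  shows "choi_reindex w y x z (((i*x+j)*y+k)*z+l) = ((i*y+k)*x+j)*z+l"
proof -
  define r where "r = ((i*x+j)*y+k)*z+l"
  have "r mod z = l" "r div z = (i*x+j)*y+k" unfolding r_def using assms by auto
  moreover have "r div (z*y) mod x = j" "r div (z*y*x) = i"
    using assms by (simp_all add: r_def div_mult2_eq)
  ultimately show ?thesis unfolding r_def[symmetric] choi_reindex_def Let_def
    using assms by (simp add: mult_ac)
qed

lemma bij_betw_choi_reindex:
  "bij_betw (choi_reindex w y x z) {..<w*x*y*z} {..<w*y*x*z}"
proof (rule bij_betw_byWitness[where f' = "choi_reindex w x y z"])
  show "\<forall>r\<in>{..<w*x*y*z}. choi_reindex w x y z (choi_reindex w y x z r) = r"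
    by (auto elim!: quad_index_cases simp: choi_reindex_quad_index)
  show "\<forall>r\<in>{..<w*y*x*z}. choi_reindex w y x z (choi_reindex w x y z r) = r"
    by (auto elim!: quad_index_cases simp: choi_reindex_quad_index)
  show "choi_reindex w y x z ` {..<w*x*y*z} \<subseteq> {..<w*y*x*z}"
    by (auto elim!: quad_index_cases simp: choi_reindex_quad_index quad_index_less)
  show "choi_reindex w x y z ` {..<w*y*x*z} \<subseteq> {..<w*x*y*z}"
    by (auto elim!: quad_index_cases simp: choi_reindex_quad_index quad_index_less)
qed

lemma choi_state_eq_reindex_choi:
  "choi_state dA' dB' dA dB N = mat (dA'*dA*dB'*dB) (dA'*dA*dB'*dB)
     (\<lambda>(r,c). choi (dA'*dB') (dA*dB) N $$ (choi_reindex dA' dB' dA dB r, choi_reindex dA' dB' dA dB c))"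
  unfolding choi_state_def choi_def Let_def ..

lemma bij_betw_choi_reindex_state:
  "bij_betw (choi_reindex dA' dB' dA dB) {..<dA'*dA*dB'*dB} {..<dA'*dA*dB'*dB}"
  using bij_betw_choi_reindex[of dA' dB' dA dB] by (simp add: mult_ac)

lemma choi_state_dims [simp]:
  "dim_row (choi_state dA' dB' dA dB N) = dA'*dA*dB'*dB"
  "dim_col (choi_state dA' dB' dA dB N) = dA'*dA*dB'*dB"
  unfolding choi_state_def Let_def by simp_all

lemma choi_state_entry:
  assumes "ra < dA'" "a < dA" "rb < dB'" "b < dB" "ra2 < dA'" "a2 < dA" "rb2 < dB'" "b2 < dB"
  shows "choi_state dA' dB' dA dB N $$ (((ra*dA+a)*dB'+rb)*dB+b, ((ra2*dA+a2)*dB'+rb2)*dB+b2)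
     = choi (dA'*dB') (dA*dB) N $$ ((ra*dB'+rb)*(dA*dB) + (a*dB+b), (ra2*dB'+rb2)*(dA*dB) + (a2*dB+b2))"
proof -
  have "((ra*dB'+rb)*dA+a)*dB+b = (ra*dB'+rb)*(dA*dB) + (a*dB+b)"
    "((ra2*dB'+rb2)*dA+a2)*dB+b2 = (ra2*dB'+rb2)*(dA*dB) + (a2*dB+b2)"
    by (simp_all add: algebra_simps)
  then show ?thesis
    unfolding choi_state_eq_reindex_choi
    using assms quad_index_less[of ra dA' a dA rb dB' b dB] quad_index_less[of ra2 dA' a2 dA rb2 dB' b2 dB]
    by (simp add: choi_reindex_quad_index add.assoc)
qed

lemma psd_choi_state:
  assumes "N \<in> channels (dA'*dB') (dA*dB)" "0 < dA'" "0 < dB'"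
  shows "psd (dA'*dA*dB'*dB) (choi_state dA' dB' dA dB N)"
proof -
  have "psd (dA'*dA*dB'*dB) (choi (dA'*dB') (dA*dB) N)"
    using psd_choi_if_completely_positive[OF channels_completely_positive[OF assms(1)]] assms(2,3)
    by (simp add: mult_ac)
  moreover have C: "choi (dA'*dB') (dA*dB) N \<in> carrier_mat (dA'*dA*dB'*dB) (dA'*dA*dB'*dB)"
    using choi_carrier[of "dA'*dB'" "dA*dB" N] by (simp add: mult_ac)
  ultimately show ?thesis
    unfolding choi_state_eq_reindex_choi psd_reindex_bij_iff[OF bij_betw_choi_reindex_state C] by blast
qed

lemma Dmax_choi_state:
  "Dmax (dA'*dA*dB'*dB) (choi_state dA' dB' dA dB N) (choi_state dA' dB' dA dB M)
     = Dmax ((dA'*dB')*(dA*dB)) (choi (dA'*dB') (dA*dB) N) (choi (dA'*dB') (dA*dB) M)"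
proof -
  have "choi (dA'*dB') (dA*dB) L \<in> carrier_mat (dA'*dA*dB'*dB) (dA'*dA*dB'*dB)" for L
    using choi_carrier[of "dA'*dB'" "dA*dB" L] by (simp add: mult_ac)
  then show ?thesis
    unfolding choi_state_eq_reindex_choi
    by (subst Dmax_reindex_bij[OF bij_betw_choi_reindex_state]) (simp_all add: mult_ac)
qed

lemma tensor_map_dims [simp]:
  "dim_row (tensor_map d1 d2 e1 e2 M1 M2 X) = e1*e2" "dim_col (tensor_map d1 d2 e1 e2 M1 M2 X) = e1*e2"
  unfolding tensor_map_def by simp_all

lemma tensor_map_entry:
  assumes M1: "linear_map_on d1 e1 M1" and M2: "linear_map_on d2 e2 M2" and rc: "r < e1*e2" "c < e1*e2"
  shows "tensor_map d1 d2 e1 e2 M1 M2 X $$ (r,c) = (\<Sum>i<d1. \<Sum>j<d1.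
     M1 (mat_unit d1 i j) $$ (r div e2, c div e2) * M2 (block_of d2 X i j) $$ (r mod e2, c mod e2))"
proof -
  have "0 < e2" using rc by (cases "e2 = 0") auto
  then have "r div e2 < e1" "c div e2 < e1" "r mod e2 < e2" "c mod e2 < e2"
    using rc by (auto simp: div_less_iff_less_mult mult.commute)
  moreover have "dim_row (M2 (block_of d2 X i j)) = e2" "dim_col (M2 (block_of d2 X i j)) = e2" for i j
    using carrier_matD[OF linear_map_on_carrier[OF M2 block_of_carrier]] by simp_all
  moreover have "dim_row (M1 (mat_unit d1 i j)) = e1" "dim_col (M1 (mat_unit d1 i j)) = e1" for i j
    using carrier_matD[OF linear_map_on_carrier[OF M1 mat_unit_carrier]] by simp_all
  ultimately show ?thesis
    unfolding tensor_map_def using rc by (simp add: tensor_mat_def)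
qed

lemma tensor_map_add:
  assumes M1: "linear_map_on d1 e1 M1" and M2: "linear_map_on d2 e2 M2"
    and X: "X \<in> carrier_mat (d1*d2) (d1*d2)" and Y: "Y \<in> carrier_mat (d1*d2) (d1*d2)"
  shows "tensor_map d1 d2 e1 e2 M1 M2 (X + Y)
     = tensor_map d1 d2 e1 e2 M1 M2 X + tensor_map d1 d2 e1 e2 M1 M2 Y" (is "?T (X + Y) = _")
proof (rule eq_matI)
  fix r c assume "r < dim_row (?T X + ?T Y)" "c < dim_col (?T X + ?T Y)"
  then have rc: "r < e1*e2" "c < e1*e2" by simp_all
  then have "0 < e2" by (cases "e2 = 0") auto
  then have "M2 (block_of d2 (X + Y) i j) $$ (r mod e2, c mod e2)
      = M2 (block_of d2 X i j) $$ (r mod e2, c mod e2) + M2 (block_of d2 Y i j) $$ (r mod e2, c mod e2)"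
    if "i < d1" "j < d1" for i j
    using block_of_add[OF X Y that] linear_map_on_add[OF M2 block_of_carrier block_of_carrier]
      carrier_matD[OF linear_map_on_carrier[OF M2 block_of_carrier]] by simp
  then have "?T (X + Y) $$ (r,c) = (\<Sum>i<d1. \<Sum>j<d1. M1 (mat_unit d1 i j) $$ (r div e2, c div e2)
      * (M2 (block_of d2 X i j) $$ (r mod e2, c mod e2) + M2 (block_of d2 Y i j) $$ (r mod e2, c mod e2)))"
    unfolding tensor_map_entry[OF M1 M2 rc] by (intro sum.cong refl) simp
  also have "\<dots> = ?T X $$ (r,c) + ?T Y $$ (r,c)"
    unfolding tensor_map_entry[OF M1 M2 rc] by (simp only: sum.distrib distrib_left)
  finally show "?T (X + Y) $$ (r,c) = (?T X + ?T Y) $$ (r,c)" using rc by simp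
qed simp_all

lemma tensor_map_smult:
  assumes M1: "linear_map_on d1 e1 M1" and M2: "linear_map_on d2 e2 M2"
    and X: "X \<in> carrier_mat (d1*d2) (d1*d2)"
  shows "tensor_map d1 d2 e1 e2 M1 M2 (a \<cdot>\<^sub>m X) = a \<cdot>\<^sub>m tensor_map d1 d2 e1 e2 M1 M2 X"
    (is "?T (a \<cdot>\<^sub>m X) = _")
proof (rule eq_matI)
  fix r c assume "r < dim_row (a \<cdot>\<^sub>m ?T X)" "c < dim_col (a \<cdot>\<^sub>m ?T X)"
  then have rc: "r < e1*e2" "c < e1*e2" by simp_all
  then have "0 < e2" by (cases "e2 = 0") auto
  then have "M2 (block_of d2 (a \<cdot>\<^sub>m X) i j) $$ (r mod e2, c mod e2)
      = a * M2 (block_of d2 X i j) $$ (r mod e2, c mod e2)"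
    if "i < d1" "j < d1" for i j
    using block_of_smult[OF X that] linear_map_on_smult[OF M2 block_of_carrier]
      carrier_matD[OF linear_map_on_carrier[OF M2 block_of_carrier]] by simp
  then have "?T (a \<cdot>\<^sub>m X) $$ (r,c) = (\<Sum>i<d1. \<Sum>j<d1. a * (M1 (mat_unit d1 i j) $$ (r div e2, c div e2)
      * M2 (block_of d2 X i j) $$ (r mod e2, c mod e2)))"
    unfolding tensor_map_entry[OF M1 M2 rc] by (intro sum.cong refl) simp
  also have "\<dots> = a * ?T X $$ (r,c)"
    unfolding tensor_map_entry[OF M1 M2 rc] by (simp only: sum_distrib_left)
  finally show "?T (a \<cdot>\<^sub>m X) $$ (r,c) = (a \<cdot>\<^sub>m ?T X) $$ (r,c)" using rc by simp
qed simp_all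

lemma tensor_map_linear:
  assumes "linear_map_on d1 e1 M1" "linear_map_on d2 e2 M2"
  shows "linear_map_on (d1*d2) (e1*e2) (tensor_map d1 d2 e1 e2 M1 M2)"
  unfolding linear_map_on_def
  using tensor_map_add[OF assms] tensor_map_smult[OF assms] by (auto intro!: carrier_matI)

lemma repl_id_linear: "linear_map_on d' d (repl_id d)"
  unfolding linear_map_on_def repl_id_def
  by (auto simp: mtrace_add mtrace_smult add_smult_distrib_left_mat smult_smult_mat)

lemma repl_id_mat_unit_entry:
  "i < d' \<Longrightarrow> a < d \<Longrightarrow> b < d \<Longrightarrow> repl_id d (mat_unit d' i j) $$ (a,b) = (if i = j \<and> a = b then 1 else 0)"
  unfolding repl_id_def by (simp add: mtrace_mat_unit)

lemma tensor_map_repl_id_entry: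
  assumes Q: "linear_map_on dB' dB Q" and rc: "r < dA*dB" "c < dA*dB"
  shows "tensor_map dA' dB' dA dB (repl_id dA) Q X $$ (r,c)
     = (if r div dB = c div dB then (\<Sum>i<dA'. Q (block_of dB' X i i) $$ (r mod dB, c mod dB)) else 0)"
proof -
  have "0 < dB" using rc by (cases "dB = 0") auto
  then have "r div dB < dA" "c div dB < dA"
    using rc by (auto simp: div_less_iff_less_mult mult.commute)
  then show ?thesis
    unfolding tensor_map_entry[OF repl_id_linear Q rc]
    by (simp add: repl_id_mat_unit_entry if_zero_distrib sum.delta)
qed

lemma block_of_mat_unit_diag:
  assumes "x < k" "p < d" "y < k" "q < d" "i < k"
  shows "block_of d (mat_unit (k*d) (x*d+p) (y*d+q)) i i
     = (if i = x \<and> i = y then mat_unit d p q else 0\<^sub>m d d)"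
proof (rule eq_matI)
  fix a b assume "a < dim_row (if i = x \<and> i = y then mat_unit d p q else 0\<^sub>m d d)"
    "b < dim_col (if i = x \<and> i = y then mat_unit d p q else 0\<^sub>m d d)"
  then have "a < d" "b < d" by (auto simp: mat_unit_def split: if_splits)
  then show "block_of d (mat_unit (k*d) (x*d+p) (y*d+q)) i i $$ (a,b)
      = (if i = x \<and> i = y then mat_unit d p q else 0\<^sub>m d d) $$ (a,b)"
    using assms by (auto simp: block_of_def mat_unit_def pair_index_less pair_index_eq_iff)
qed (auto simp: block_of_def mat_unit_def)

lemma tensor_map_repl_id_mat_unit:
  assumes Q: "linear_map_on dB' dB Q"
    and "xa < dA'" "xb < dB'" "ya < dA'" "yb < dB'" "r < dA*dB" "c < dA*dB"
  shows "tensor_map dA' dB' dA dB (repl_id dA) Q (mat_unit (dA'*dB') (xa*dB'+xb) (ya*dB'+yb)) $$ (r,c)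
    = (if r div dB = c div dB \<and> xa = ya then Q (mat_unit dB' xb yb) $$ (r mod dB, c mod dB) else 0)"
proof -
  have "0 < dB" using assms by (cases "dB = 0") auto
  then have Q0: "Q (0\<^sub>m dB' dB') $$ (r mod dB, c mod dB) = 0"
    using linear_map_on_zero[OF Q] by simp
  have "block_of dB' (mat_unit (dA'*dB') (xa*dB'+xb) (ya*dB'+yb)) i i
      = (if i = xa \<and> i = ya then mat_unit dB' xb yb else 0\<^sub>m dB' dB')" if "i < dA'" for i
    using assms that by (simp add: block_of_mat_unit_diag)
  then have "(\<Sum>i<dA'. Q (block_of dB' (mat_unit (dA'*dB') (xa*dB'+xb) (ya*dB'+yb)) i i)
        $$ (r mod dB, c mod dB))
      = (\<Sum>i<dA'. if i = xa then (if xa = ya then Q (mat_unit dB' xb yb) $$ (r mod dB, c mod dB) else 0) else 0)"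
    using Q0 by (intro sum.cong refl) auto
  also have "\<dots> = (if xa = ya then Q (mat_unit dB' xb yb) $$ (r mod dB, c mod dB) else 0)"
    using assms by (simp add: sum.delta')
  finally show ?thesis
    unfolding tensor_map_repl_id_entry[OF Q assms(6,7)] by auto
qed

lemma tensor_mat_one_left_entry:
  assumes "B \<in> carrier_mat m m" "x < n" "y < n" "p < m" "q < m"
  shows "tensor_mat (1\<^sub>m n) B $$ (x*m+p, y*m+q) = (if x = y then B $$ (p,q) else 0)"
  using assms by (simp add: tensor_mat_def pair_index_less)

lemma choi_state_repl_tensor:
  assumes Q: "linear_map_on dB' dB Q"
  shows "choi_state dA' dB' dA dB (tensor_map dA' dB' dA dB (repl_id dA) Q)
     = complex_of_real (1 / real dA') \<cdot>\<^sub>m tensor_mat (1\<^sub>m (dA'*dA)) (choi dB' dB Q)"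
    (is "?L = ?R")
proof (rule eq_matI)
  fix r c assume "r < dim_row ?R" "c < dim_col ?R"
  then have rc: "r < dA'*dA*dB'*dB" "c < dA'*dA*dB'*dB"
    by (simp_all add: tensor_mat_def mult_ac)
  then obtain ra a rb b ra2 a2 rb2 b2
    where bounds: "ra < dA'" "a < dA" "rb < dB'" "b < dB" "ra2 < dA'" "a2 < dA" "rb2 < dB'" "b2 < dB"
      and r: "r = ((ra*dA+a)*dB'+rb)*dB+b" and c: "c = ((ra2*dA+a2)*dB'+rb2)*dB+b2"
    by (elim quad_index_cases)
  have "?L $$ (r,c) = (if a = a2 \<and> ra = ra2 then Q (mat_unit dB' rb rb2) $$ (b, b2) else 0)
      / of_nat (dA'*dB')"
    unfolding r c choi_state_entry[OF bounds]
    using bounds by (simp add: choi_entry[OF tensor_map_linear[OF repl_id_linear Q]]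
        tensor_map_repl_id_mat_unit[OF Q] pair_index_less)
  also have "\<dots> = ?R $$ (r,c)"
  proof -
    have idx: "r = (ra*dA+a)*(dB'*dB) + (rb*dB+b)" "c = (ra2*dA+a2)*(dB'*dB) + (rb2*dB+b2)"
      unfolding r c by (simp_all add: algebra_simps)
    have "?R $$ (r,c) = complex_of_real (1 / real dA') * tensor_mat (1\<^sub>m (dA'*dA)) (choi dB' dB Q) $$ (r,c)"
      by (rule index_smult_mat) (use rc in \<open>simp_all add: tensor_mat_def mult_ac\<close>)
    also have "\<dots> = complex_of_real (1 / real dA')
        * (if ra*dA+a = ra2*dA+a2 then choi dB' dB Q $$ (rb*dB+b, rb2*dB+b2) else 0)"
      unfolding idx using bounds by (simp add: tensor_mat_one_left_entry pair_index_less)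
    finally show ?thesis
      using bounds by (simp add: choi_entry[OF Q] pair_index_eq_iff conj_commute)
  qed
  finally show "?L $$ (r,c) = ?R $$ (r,c)" .
qed (simp_all add: tensor_mat_def mult_ac)

lemma ereal_minus_log_inverse: "0 < c \<Longrightarrow> x - ereal (log 2 (1 / c)) = x + ereal (log 2 c)"
  by (cases x) (simp_all add: log_divide)

theorem Dmax_ch_repl_tensor:
  assumes N: "linear_map_on (dA'*dB') (dA*dB) N" and Q: "linear_map_on dB' dB Q"
    and "0 < dA'" "0 < dB'"
  shows "Dmax_ch (dA'*dB') (dA*dB) N (tensor_map dA' dB' dA dB (repl_id dA) Q)
     = Dmax ((dA'*dA)*(dB'*dB)) (choi_state dA' dB' dA dB N) (tensor_mat (1\<^sub>m (dA'*dA)) (choi dB' dB Q))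
       + ereal (log 2 (real dA'))"
proof -
  have dim: "dA'*dA*dB'*dB = (dA'*dA)*(dB'*dB)" by (simp add: mult.assoc)
  have "Dmax_ch (dA'*dB') (dA*dB) N (tensor_map dA' dB' dA dB (repl_id dA) Q)
      = Dmax (dA'*dA*dB'*dB) (choi_state dA' dB' dA dB N)
          (choi_state dA' dB' dA dB (tensor_map dA' dB' dA dB (repl_id dA) Q))"
    unfolding Dmax_choi_state
    using assms by (simp add: Dmax_ch_eq_Dmax_choi tensor_map_linear repl_id_linear)
  also have "\<dots> = Dmax ((dA'*dA)*(dB'*dB)) (choi_state dA' dB' dA dB N)
      (tensor_mat (1\<^sub>m (dA'*dA)) (choi dB' dB Q)) - ereal (log 2 (1 / real dA'))"
    unfolding choi_state_repl_tensor[OF Q] dim by (rule Dmax_smult_right) (use assms in simp)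
  finally show ?thesis
    unfolding ereal_minus_log_inverse[OF of_nat_0_less_iff[THEN iffD2, OF assms(3)]] .
qed

section \<open>Channels with a prescribed Choi matrix\<close>

definition map_of_choi :: "nat \<Rightarrow> nat \<Rightarrow> complex mat \<Rightarrow> complex mat \<Rightarrow> complex mat" where
  "map_of_choi din dout \<sigma> X = mat dout dout
     (\<lambda>(p,q). of_nat din * (\<Sum>i<din. \<Sum>j<din. X $$ (i,j) * \<sigma> $$ (i*dout+p, j*dout+q)))"

lemma map_of_choi_linear: "linear_map_on din dout (map_of_choi din dout \<sigma>)"
  unfolding linear_map_on_def
proof (intro conjI ballI allI)
  fix X Y :: "complex mat" and c :: complex
  assume X: "X \<in> carrier_mat din din" and Y: "Y \<in> carrier_mat din din"
  show "map_of_choi din dout \<sigma> X \<in> carrier_mat dout dout"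
    unfolding map_of_choi_def by simp
  show "map_of_choi din dout \<sigma> (X + Y) = map_of_choi din dout \<sigma> X + map_of_choi din dout \<sigma> Y"
    unfolding map_of_choi_def using X Y
    by (intro eq_matI) (simp_all add: sum.distrib distrib_left distrib_right)
  show "map_of_choi din dout \<sigma> (c \<cdot>\<^sub>m X) = c \<cdot>\<^sub>m map_of_choi din dout \<sigma> X"
    unfolding map_of_choi_def using X
    by (intro eq_matI) (simp_all add: sum_distrib_left mult_ac)
qed

lemma choi_map_of_choi:
  assumes \<sigma>: "\<sigma> \<in> carrier_mat (din*dout) (din*dout)" and "0 < din"
  shows "choi din dout (map_of_choi din dout \<sigma>) = \<sigma>"
proof (rule eq_matI)
  fix r c assume "r < dim_row \<sigma>" "c < dim_col \<sigma>"
  then have rc: "r < din*dout" "c < din*dout" using \<sigma> by auto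
  then have "0 < dout" by (cases "dout = 0") auto
  then have bounds: "r div dout < din" "c div dout < din" "r mod dout < dout" "c mod dout < dout"
    using rc by (auto simp: div_less_iff_less_mult mult.commute)
  have "choi din dout (map_of_choi din dout \<sigma>) $$ ((r div dout)*dout + r mod dout, (c div dout)*dout + c mod dout)
      = map_of_choi din dout \<sigma> (mat_unit din (r div dout) (c div dout)) $$ (r mod dout, c mod dout)
        / of_nat din"
    by (rule choi_entry[OF map_of_choi_linear bounds])
  also have "\<dots> = \<sigma> $$ ((r div dout)*dout + r mod dout, (c div dout)*dout + c mod dout)"
    using assms bounds by (simp add: map_of_choi_def mat_unit_def if_zero_distrib sum_sum_delta)
  finally show "choi din dout (map_of_choi din dout \<sigma>) $$ (r,c) = \<sigma> $$ (r,c)"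
    by (simp only: div_mult_mod_eq)
qed (use \<sigma> in auto)

lemma map_of_choi_channel:
  assumes \<sigma>: "psd (din*dout) \<sigma>" and "0 < din"
    and tr: "\<And>i j. i < din \<Longrightarrow> j < din \<Longrightarrow>
      (\<Sum>q<dout. \<sigma> $$ (i*dout+q, j*dout+q)) = (if i = j then 1 / of_nat din else 0)"
  shows "map_of_choi din dout \<sigma> \<in> channels din dout"
proof -
  have choi: "choi din dout (map_of_choi din dout \<sigma>) = \<sigma>"
    using \<sigma> assms(2) by (intro choi_map_of_choi) (auto simp: psd_def)
  have "completely_positive din dout (map_of_choi din dout \<sigma>)"
    unfolding completely_positive_def
    using psd_id_tensor_map_if_psd_choi[OF map_of_choi_linear] \<sigma> choi
    by (auto simp: map_of_choi_linear)
  moreover have "mtrace (map_of_choi din dout \<sigma> X) = mtrace X" if X: "X \<in> carrier_mat din din" for X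
  proof -
    have "mtrace (map_of_choi din dout \<sigma> X)
        = of_nat din * (\<Sum>i<din. \<Sum>j<din. X $$ (i,j) * (\<Sum>q<dout. \<sigma> $$ (i*dout+q, j*dout+q)))"
      unfolding mtrace_def map_of_choi_def
      by (simp add: sum_distrib_left sum_rotate3[of _ "{..<dout}"] mult_ac)
    also have "\<dots> = of_nat din * (\<Sum>i<din. X $$ (i,i) / of_nat din)"
      by (simp add: tr if_zero_distrib sum.delta)
    also have "\<dots> = mtrace X"
      using assms(2) X by (simp add: mtrace_carrier sum_distrib_left)
    finally show ?thesis .
  qed
  ultimately show ?thesis unfolding channels_def by blast
qed

lemma ptrace1_choi_state_entry:
  assumes ij: "i < dB'" "j < dB'" and p: "p < dB"
  shows "ptrace1 (dA'*dA) (dB'*dB) (choi_state dA' dB' dA dB N) $$ (i*dB+p, j*dB+p)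
     = (\<Sum>ra<dA'. \<Sum>a<dA. choi (dA'*dB') (dA*dB) N
          $$ ((ra*dB'+i)*(dA*dB) + (a*dB+p), (ra*dB'+j)*(dA*dB) + (a*dB+p)))"
proof -
  have "ptrace1 (dA'*dA) (dB'*dB) (choi_state dA' dB' dA dB N) $$ (i*dB+p, j*dB+p)
      = (\<Sum>ra<dA'. \<Sum>a<dA. choi_state dA' dB' dA dB N
          $$ ((ra*dA+a)*(dB'*dB) + (i*dB+p), (ra*dA+a)*(dB'*dB) + (j*dB+p)))"
    unfolding ptrace1_def using ij p by (simp add: pair_index_less sum_lessThan_mult[of _ dA' dA])
  also have "\<dots> = (\<Sum>ra<dA'. \<Sum>a<dA. choi (dA'*dB') (dA*dB) N
      $$ ((ra*dB'+i)*(dA*dB) + (a*dB+p), (ra*dB'+j)*(dA*dB) + (a*dB+p)))"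
  proof (intro sum.cong refl)
    fix ra a assume ra_a: "ra \<in> {..<dA'}" "a \<in> {..<dA}"
    have idx: "(ra*dA+a)*(dB'*dB) + (i*dB+p) = ((ra*dA+a)*dB'+i)*dB+p"
      "(ra*dA+a)*(dB'*dB) + (j*dB+p) = ((ra*dA+a)*dB'+j)*dB+p"
      by (simp_all add: algebra_simps)
    show "choi_state dA' dB' dA dB N
          $$ ((ra*dA+a)*(dB'*dB) + (i*dB+p), (ra*dA+a)*(dB'*dB) + (j*dB+p))
        = choi (dA'*dB') (dA*dB) N $$ ((ra*dB'+i)*(dA*dB) + (a*dB+p), (ra*dB'+j)*(dA*dB) + (a*dB+p))"
      unfolding idx by (rule choi_state_entry) (use ij p ra_a in auto)
  qed
  finally show ?thesis .
qed

lemma ptrace1_choi_state_block_trace: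
  assumes N: "N \<in> channels (dA'*dB') (dA*dB)" and "0 < dA'" and ij: "i < dB'" "j < dB'"
  shows "(\<Sum>p<dB. ptrace1 (dA'*dA) (dB'*dB) (choi_state dA' dB' dA dB N) $$ (i*dB+p, j*dB+p))
     = (if i = j then 1 / of_nat dB' else 0)"
proof -
  let ?C = "choi (dA'*dB') (dA*dB) N"
  have "(\<Sum>p<dB. ptrace1 (dA'*dA) (dB'*dB) (choi_state dA' dB' dA dB N) $$ (i*dB+p, j*dB+p))
      = (\<Sum>p<dB. \<Sum>ra<dA'. \<Sum>a<dA. ?C $$ ((ra*dB'+i)*(dA*dB) + (a*dB+p), (ra*dB'+j)*(dA*dB) + (a*dB+p)))"
    using ij by (intro sum.cong refl) (simp add: ptrace1_choi_state_entry)
  also have "\<dots> = (\<Sum>ra<dA'. \<Sum>q<dA*dB. ?C $$ ((ra*dB'+i)*(dA*dB) + q, (ra*dB'+j)*(dA*dB) + q))"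
    by (subst sum.swap) (simp add: sum_lessThan_mult sum.swap[of _ "{..<dB}"])
  also have "\<dots> = (\<Sum>ra<dA'. if i = j then 1 / of_nat (dA'*dB') else 0)"
    using ij by (intro sum.cong refl) (simp add: choi_block_trace[OF N] pair_index_less pair_index_eq_iff)
  also have "\<dots> = (if i = j then 1 / of_nat dB' else 0)"
    using assms(2) by simp
  finally show ?thesis .
qed

lemma ptrace1_choi_state_is_choi_of_channel:
  assumes N: "N \<in> channels (dA'*dB') (dA*dB)" and "0 < dA'" "0 < dB'"
  shows "\<exists>Q\<in>channels dB' dB. choi dB' dB Q = ptrace1 (dA'*dA) (dB'*dB) (choi_state dA' dB' dA dB N)"
proof
  let ?\<sigma> = "ptrace1 (dA'*dA) (dB'*dB) (choi_state dA' dB' dA dB N)"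
  have "psd ((dA'*dA)*(dB'*dB)) (choi_state dA' dB' dA dB N)"
    using psd_choi_state[OF assms] by (simp add: mult.assoc)
  then have \<sigma>: "psd (dB'*dB) ?\<sigma>" by (rule psd_ptrace1)
  then show "choi dB' dB (map_of_choi dB' dB ?\<sigma>) = ?\<sigma>"
    using assms(3) by (intro choi_map_of_choi) (auto simp: psd_def)
  show "map_of_choi dB' dB ?\<sigma> \<in> channels dB' dB"
    using \<sigma> assms(3) ptrace1_choi_state_block_trace[OF N assms(2)] by (rule map_of_choi_channel)
qed

lemma ereal_uminus_add_real: "- (a + ereal c) = - a - ereal c"
  by (cases a) auto

theorem proposition5:
  fixes dA' dB' dA dB :: nat and N :: "complex mat \<Rightarrow> complex mat"
  assumes "0 < dA'" "0 < dB'" "0 < dA" "0 < dB"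
    and "N \<in> channels (dA' * dB') (dA * dB)"
  shows "cond_min_entropy_down (dA' * dA) (dB' * dB) (choi_state dA' dB' dA dB N)
           - ereal (log 2 (real dA'))
         \<le> chan_cond_min_entropy dA' dB' dA dB N \<and>
         chan_cond_min_entropy dA' dB' dA dB N
         \<le> cond_min_entropy (dA' * dA) (dB' * dB) (choi_state dA' dB' dA dB N)
           - ereal (log 2 (real dA'))"
proof -
  let ?\<Phi> = "choi_state dA' dB' dA dB N"
  let ?D = "\<lambda>\<sigma>. Dmax ((dA'*dA)*(dB'*dB)) ?\<Phi> (tensor_mat (1\<^sub>m (dA'*dA)) \<sigma>)"
  let ?Dch = "\<lambda>Q. Dmax_ch (dA'*dB') (dA*dB) N (tensor_map dA' dB' dA dB (repl_id dA) Q)"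
  let ?log = "ereal (log 2 (real dA'))"
  have Dch: "?Dch Q = ?D (choi dB' dB Q) + ?log" if "Q \<in> channels dB' dB" for Q
    using Dmax_ch_repl_tensor[OF channels_linear[OF assms(5)] channels_linear[OF that] assms(1,2)] .
  have "(INF \<sigma>\<in>density_ops (dB'*dB). ?D \<sigma>) + ?log \<le> (INF Q\<in>channels dB' dB. ?Dch Q)"
    using assms(2) by (auto intro!: INF_greatest add_right_mono INF_lower choi_density simp: Dch)
  moreover obtain Q0 where "Q0 \<in> channels dB' dB" "choi dB' dB Q0 = ptrace1 (dA'*dA) (dB'*dB) ?\<Phi>"
    using ptrace1_choi_state_is_choi_of_channel[OF assms(5,1,2)] by blast
  then have "(INF Q\<in>channels dB' dB. ?Dch Q) \<le> ?D (ptrace1 (dA'*dA) (dB'*dB) ?\<Phi>) + ?log"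
    by (metis Dch INF_lower)
  ultimately show ?thesis
    unfolding chan_cond_min_entropy_def cond_min_entropy_def cond_min_entropy_down_def
      ereal_uminus_add_real[symmetric]
    by (simp add: ereal_minus_le_minus)
qed

end
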